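(* There exists an absolute constant $C>0$ such that the following holds. Let $\mathcal D$ be a distribution on $[0,1]\times\{0,1\}$ and let $S$ be the uniform distribution over $T$ data points $(p_1,y_1),\ldots,(p_T,y_T)$ drawn i.i.d. from $\mathcal D$. For every positive integer $m$, every $i\in\{0,\ldots,m\}$ and every $\delta\in(0,1/(2m))$, with probability at least $1-\delta$, $$|\mathsf{SCFDL}_{m,i}(S)-\mathsf{SCFDL}_{m,i}(\mathcal D)|\le C\Big(\sqrt{\tfrac{\log(1/\delta)}{T}}+(\log m)\sqrt{\tfrac{m\cdot\mathsf{SCDL}_m(\mathcal D)\log(1/\delta)}{T}}+\tfrac{m(\log m)\log(1/\delta)}{T}\Big).$$
   Context: For $x\in\mathbb R$ write $x_+=\max\{x,0\}$. For a distribution $\mathcal D$ of $(p,y)\in[0,1]\times\{0,1\}$ (including the empirical distribution $S$), a positive integer $m$ and $i\in\{0,\ldots,m\}$, let $w_i(p)=(1-|mp-i|)_+$, $\pi_i=\mathbb E_{\mathcal D}[w_i(p)]$ and $q_i=\mathbb E_{\mathcal D}[w_i(p)y]/\pi_i$ (terms with $\pi_i=0$ are $0$). Define $$\mathsf{SCFDL}_{m,i}(\mathcal D)=\sum_{j=0}^{i}\pi_j\big(q_j-\tfrac{i+1}{m}\big)_+ +\sum_{j=i+1}^{m}\pi_j\big(\tfrac im-q_j\big)_+,\qquad \mathsf{SCDL}_m(\mathcal D)=\max_{i=0,\ldots,m}\mathsf{SCFDL}_{m,i}(\mathcal D).$$ *)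

theory Defs
  imports "HOL-Probability.Probability"
begin

text \<open>A distribution on [0,1] x {0,1} is represented as a probability measure on
  real x bool (label y as a boolean, True = 1).  Expectations are abstracted as a
  functional E; for the population distribution E = Lebesgue integral w.r.t. D,
  for the empirical distribution S of the sample E f = (1/T) * sum of f over the sample.\<close>

definition wt :: "nat \<Rightarrow> nat \<Rightarrow> real \<Rightarrow> real" where
  "wt m i p = max (1 - \<bar>real m * p - real i\<bar>) 0"

definition piw :: "(((real \<times> bool) \<Rightarrow> real) \<Rightarrow> real) \<Rightarrow> nat \<Rightarrow> nat \<Rightarrow> real" where
  "piw E m i = E (\<lambda>(p, y). wt m i p)"

definition qw :: "(((real \<times> bool) \<Rightarrow> real) \<Rightarrow> real) \<Rightarrow> nat \<Rightarrow> nat \<Rightarrow> real" where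
  "qw E m i = (if piw E m i = 0 then 0
               else E (\<lambda>(p, y). wt m i p * of_bool y) / piw E m i)"

definition SCFDL :: "(((real \<times> bool) \<Rightarrow> real) \<Rightarrow> real) \<Rightarrow> nat \<Rightarrow> nat \<Rightarrow> real" where
  "SCFDL E m i =
     (\<Sum>j\<in>{0..i}. piw E m j * max (qw E m j - real (i + 1) / real m) 0)
   + (\<Sum>j\<in>{i+1..m}. piw E m j * max (real i / real m - qw E m j) 0)"

definition SCDL :: "(((real \<times> bool) \<Rightarrow> real) \<Rightarrow> real) \<Rightarrow> nat \<Rightarrow> real" where
  "SCDL E m = Max (SCFDL E m ` {0..m})"

definition expD :: "(real \<times> bool) measure \<Rightarrow> ((real \<times> bool) \<Rightarrow> real) \<Rightarrow> real" where
  "expD D f = integral\<^sup>L D f"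

definition expS :: "nat \<Rightarrow> (nat \<Rightarrow> real \<times> bool) \<Rightarrow> ((real \<times> bool) \<Rightarrow> real) \<Rightarrow> real" where
  "expS T xs f = (\<Sum>t<T. f (xs t)) / real T"

end

theory Submission
  imports Defs "HOL-Library.Discrete_Functions"
begin

text \<open>
  Write \<open>w\<^sub>j = wt m j\<close> and \<open>c\<^sub>j\<close> for the threshold \<open>(i+1)/m\<close> if \<open>j \<le> i\<close> and \<open>i/m\<close> if
  \<open>j > i\<close>. Then \<open>SCFDL\<^sub>m\<^sub>,\<^sub>i\<close> is the sum over the buckets \<open>j\<close> of the positive parts of the
  signed biases \<open>\<plusminus>E[w\<^sub>j(p) (y - c\<^sub>j)]\<close>. A Bernstein-type inequality and a union bound over
  the \<open>m + 1\<close> buckets show that with probability \<open>1 - \<delta>\<close> every empirical bias is within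
  \<open>sqrt (\<pi>\<^sub>j a) + b\<close> of the population one, where \<open>a, b = O(log(m/\<delta>)/T)\<close>.

  On that event the buckets \<open>j\<close> with \<open>|j - i| \<le> 1\<close> cost \<open>O(sqrt a + b)\<close> each. A bucket at
  distance \<open>k \<ge> 2\<close> from \<open>i\<close> costs more than \<open>b\<close> only if its population margin is small.
  Let \<open>h\<close> be the largest power of two with \<open>h \<le> k/2\<close> and let \<open>d\<^sub>j\<close> be the loss of the
  bucket against the threshold moved by \<open>h/m\<close> towards it; by AM-GM the bucket costs at most
  \<open>b + O(a m (1 + 1/v)/k) + v \<pi>\<^sub>j d\<^sub>j\<close>. The terms \<open>1/k\<close> sum to \<open>ln m\<close>. The buckets of a
  given scale \<open>h\<close> contribute summands of \<open>SCFDL\<^sub>m\<^sub>,\<^sub>i\<^sub>\<plusminus>\<^sub>h\<close>, and there are at most \<open>2 ln m\<close>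
  scales, so the terms \<open>\<pi>\<^sub>j d\<^sub>j\<close> sum to at most \<open>2 (ln m) SCDL\<^sub>m\<close>. Optimising over \<open>v\<close>
  gives the rate of the theorem.
\<close>

section \<open>Calibration error as a sum of bucket biases\<close>

definition bucket_bias :: "(((real \<times> bool) \<Rightarrow> real) \<Rightarrow> real) \<Rightarrow> nat \<Rightarrow> nat \<Rightarrow> real \<Rightarrow> real" where
  "bucket_bias E m j c = E (\<lambda>(p, y). wt m j p * (of_bool y - c))"

text \<open>The properties of an expectation that the deterministic comparison uses; both the
  population expectation and the empirical mean have them.\<close>

definition bucket_expectation :: "(((real \<times> bool) \<Rightarrow> real) \<Rightarrow> real) \<Rightarrow> nat \<Rightarrow> bool" where
  "bucket_expectation E m \<longleftrightarrow>
     (\<forall>j c. bucket_bias E m j c = E (\<lambda>(p, y). wt m j p * of_bool y) - c * piw E m j) \<and>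
     (\<forall>j. 0 \<le> E (\<lambda>(p, y). wt m j p * of_bool y) \<and> E (\<lambda>(p, y). wt m j p * of_bool y) \<le> piw E m j)"

lemma bucket_expectation_piw_nonneg: "bucket_expectation E m \<Longrightarrow> 0 \<le> piw E m j"
  unfolding bucket_expectation_def by (meson order.trans)

lemma bucket_expectation_qw_bounds:
  assumes "bucket_expectation E m"
  shows "0 \<le> qw E m j" "qw E m j \<le> 1"
proof -
  have "0 \<le> E (\<lambda>(p, y). wt m j p * of_bool y)" "E (\<lambda>(p, y). wt m j p * of_bool y) \<le> piw E m j"
    using assms unfolding bucket_expectation_def by auto
  then show "0 \<le> qw E m j" "qw E m j \<le> 1"
    unfolding qw_def by (auto simp: divide_simps)
qed

lemma bucket_bias_eq:
  assumes "bucket_expectation E m"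
  shows "bucket_bias E m j c = piw E m j * (qw E m j - c)"
proof -
  have "bucket_bias E m j c = E (\<lambda>(p, y). wt m j p * of_bool y) - c * piw E m j"
    and "0 \<le> E (\<lambda>(p, y). wt m j p * of_bool y)" "E (\<lambda>(p, y). wt m j p * of_bool y) \<le> piw E m j"
    using assms unfolding bucket_expectation_def by auto
  then show ?thesis
    unfolding qw_def by (cases "piw E m j = 0") (auto simp: right_diff_distrib mult.commute)
qed

definition calib_threshold :: "nat \<Rightarrow> nat \<Rightarrow> nat \<Rightarrow> real" where
  "calib_threshold m i j = (if j \<le> i then real (i + 1) / real m else real i / real m)"

definition signed_bias :: "(((real \<times> bool) \<Rightarrow> real) \<Rightarrow> real) \<Rightarrow> nat \<Rightarrow> nat \<Rightarrow> nat \<Rightarrow> real" where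
  "signed_bias E m i j = (if j \<le> i then 1 else -1) * bucket_bias E m j (calib_threshold m i j)"

lemma signed_bias_eq:
  assumes "bucket_expectation E m"
  shows "signed_bias E m i j = piw E m j *
           (if j \<le> i then qw E m j - real (i + 1) / real m else real i / real m - qw E m j)"
  by (simp add: signed_bias_def bucket_bias_eq[OF assms] calib_threshold_def algebra_simps)

lemma SCFDL_eq_sum_signed_bias:
  assumes E: "bucket_expectation E m" and "i \<le> m"
  shows "SCFDL E m i = (\<Sum>j\<in>{0..m}. max (signed_bias E m i j) 0)"
proof -
  have split: "{0..m} = {0..i} \<union> {i+1..m}" using \<open>i \<le> m\<close> by auto
  have "max (signed_bias E m i j) 0 = piw E m j *
          max (if j \<le> i then qw E m j - real (i + 1) / real m else real i / real m - qw E m j) 0" for j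
    using bucket_expectation_piw_nonneg[OF E] by (simp add: signed_bias_eq[OF E] max_mult_distrib_left)
  then show ?thesis
    unfolding SCFDL_def split
    by (subst sum.union_disjoint) (auto intro!: arg_cong2[where f="(+)"] sum.cong)
qed

lemma SCFDL_nonneg: "bucket_expectation E m \<Longrightarrow> 0 \<le> SCFDL E m i"
  unfolding SCFDL_def using bucket_expectation_piw_nonneg
  by (intro add_nonneg_nonneg sum_nonneg mult_nonneg_nonneg) auto

lemma SCFDL_le_SCDL: "i \<le> m \<Longrightarrow> SCFDL E m i \<le> SCDL E m"
  unfolding SCDL_def by (intro Max_ge) auto

lemma SCDL_nonneg: "bucket_expectation E m \<Longrightarrow> 0 \<le> SCDL E m"
  using SCFDL_le_SCDL[of 0 m E] SCFDL_nonneg[of E m 0] by auto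

lemma SCFDL_one_eq_0:
  assumes "bucket_expectation E 1" "i \<le> 1"
  shows "SCFDL E 1 i = 0"
  using assms(2) bucket_expectation_qw_bounds[OF assms(1), of 0]
    bucket_expectation_qw_bounds[OF assms(1), of 1]
  by (cases i) (auto simp: SCFDL_def max_def)

section \<open>Harmonic sums and dyadic scales\<close>

lemma sum_inverse_le_ln: "(\<Sum>k = 2..n. 1 / real k) \<le> ln (real n)"
proof (cases "n = 0")
  case False
  then have "harm n - ln (real n) \<le> (harm 1 :: real)"
    using decseqD[OF decseq_harm_diff_ln, of 0 "n - 1"] by simp
  moreover have "harm n = 1 + (\<Sum>k = 2..n. 1 / real k)"
    using False unfolding harm_def by (simp add: sum.atLeast_Suc_atMost inverse_eq_divide numeral_2_eq_2)
  ultimately show ?thesis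
    using False by (simp add: harm_def)
qed simp

lemma sum_inverse_dist_left_le_ln: "(\<Sum>j | j + 2 \<le> i. 1 / real (i - j)) \<le> ln (real i)"
proof -
  have "(\<Sum>j | j + 2 \<le> i. 1 / real (i - j)) = (\<Sum>k = 2..i. 1 / real k)"
    by (rule sum.reindex_bij_witness[where i="\<lambda>k. i - k" and j="\<lambda>j. i - j"]) auto
  then show ?thesis
    using sum_inverse_le_ln[of i] by simp
qed

lemma sum_inverse_dist_right_le_ln: "(\<Sum>j = i + 2..m. 1 / real (j - i)) \<le> ln (real (m - i))"
proof -
  have "(\<Sum>j = i + 2..m. 1 / real (j - i)) = (\<Sum>k = 2..m - i. 1 / real k)"
    by (rule sum.reindex_bij_witness[where i="\<lambda>k. k + i" and j="\<lambda>j. j - i"]) auto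
  then show ?thesis
    using sum_inverse_le_ln[of "m - i"] by simp
qed

definition dyadic_scale :: "nat \<Rightarrow> nat" where
  "dyadic_scale k = 2 ^ floor_log (k div 2)"

lemma dyadic_scale_bounds:
  assumes "2 \<le> k"
  shows "1 \<le> dyadic_scale k" "2 * dyadic_scale k \<le> k" "k < 4 * dyadic_scale k"
proof -
  have "2 ^ floor_log (k div 2) \<le> k div 2" "k div 2 < 2 * 2 ^ floor_log (k div 2)"
    using assms floor_log_exp2_le[of "k div 2"] floor_log_exp2_gt[of "k div 2"] by auto
  then show "1 \<le> dyadic_scale k" "2 * dyadic_scale k \<le> k" "k < 4 * dyadic_scale k"
    unfolding dyadic_scale_def by auto
qed

lemma card_dyadic_scale_image_le:
  assumes "1 \<le> m"
  shows "real (card (dyadic_scale ` {2..m})) \<le> 2 * ln (real m)"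
proof -
  have "dyadic_scale ` {2..m} \<subseteq> (\<lambda>r. 2 ^ r) ` {..<floor_log m}"
  proof
    fix h assume "h \<in> dyadic_scale ` {2..m}"
    then obtain k where k: "2 \<le> k" "k \<le> m" "h = 2 ^ floor_log (k div 2)"
      unfolding dyadic_scale_def by auto
    have "floor_log 2 \<le> floor_log k" "floor_log k \<le> floor_log m"
      using k by (simp_all add: floor_log_le_iff)
    moreover have "floor_log 2 = 1"
      using floor_log_power[of 1] by simp
    ultimately have "floor_log (k div 2) < floor_log m"
      by simp
    then show "h \<in> (\<lambda>r. 2 ^ r) ` {..<floor_log m}" using k by auto
  qed
  then have "card (dyadic_scale ` {2..m}) \<le> card ((\<lambda>r. (2::nat) ^ r) ` {..<floor_log m})"
    by (intro card_mono) auto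
  also have "\<dots> \<le> floor_log m"
    using card_image_le[of "{..<floor_log m}" "\<lambda>r. (2::nat) ^ r"] by simp
  finally have card: "real (card (dyadic_scale ` {2..m})) \<le> real (floor_log m)"
    by simp
  have "2 ^ floor_log m \<le> m"
    using floor_log_exp2_le[of m] assms by simp
  then have "(2::real) ^ floor_log m \<le> real m"
    by (metis of_nat_le_iff of_nat_numeral of_nat_power)
  then have "ln ((2::real) ^ floor_log m) \<le> ln (real m)"
    using assms by (subst ln_le_cancel_iff) auto
  then have "real (floor_log m) * ln 2 \<le> ln (real m)"
    by (simp add: ln_realpow)
  moreover have "real (floor_log m) * (2 / 3) \<le> real (floor_log m) * ln 2"
    using ln2_ge_two_thirds by (intro mult_left_mono) auto
  ultimately show ?thesis
    using card by linarith
qed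

lemma sum_le_card_image_mult:
  fixes f :: "'a \<Rightarrow> real"
  assumes "finite J" and "\<And>h. h \<in> g ` J \<Longrightarrow> (\<Sum>j\<in>{j\<in>J. g j = h}. f j) \<le> s"
  shows "(\<Sum>j\<in>J. f j) \<le> real (card (g ` J)) * s"
proof -
  have "(\<Sum>j\<in>J. f j) = (\<Sum>h\<in>g ` J. \<Sum>j\<in>{j\<in>J. g j = h}. f j)"
    by (rule sum.image_gen[OF assms(1)])
  also have "\<dots> \<le> real (card (g ` J)) * s"
    by (rule sum_bounded_above) (rule assms(2))
  finally show ?thesis .
qed

lemma sum_le_ln_mult_by_dyadic_scale:
  fixes f :: "'a \<Rightarrow> real"
  assumes "finite J" "1 \<le> m" "0 \<le> s" and k: "\<And>j. j \<in> J \<Longrightarrow> 2 \<le> k j \<and> k j \<le> m"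
    and "\<And>h. h \<in> (\<lambda>j. dyadic_scale (k j)) ` J \<Longrightarrow> (\<Sum>j\<in>{j\<in>J. dyadic_scale (k j) = h}. f j) \<le> s"
  shows "(\<Sum>j\<in>J. f j) \<le> 2 * ln (real m) * s"
proof -
  have "card ((\<lambda>j. dyadic_scale (k j)) ` J) \<le> card (dyadic_scale ` {2..m})"
    using k by (intro card_mono) auto
  then have "real (card ((\<lambda>j. dyadic_scale (k j)) ` J)) \<le> 2 * ln (real m)"
    using card_dyadic_scale_image_le[OF \<open>1 \<le> m\<close>] by linarith
  then have "real (card ((\<lambda>j. dyadic_scale (k j)) ` J)) * s \<le> 2 * ln (real m) * s"
    using \<open>0 \<le> s\<close> by (rule mult_right_mono)
  moreover have "(\<Sum>j\<in>J. f j) \<le> real (card ((\<lambda>j. dyadic_scale (k j)) ` J)) * s"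
    using assms(1,5) by (rule sum_le_card_image_mult)
  ultimately show ?thesis
    by linarith
qed

section \<open>Comparing the calibration errors of two bucket expectations\<close>

text \<open>AM-GM with weights \<open>D v\<close> and \<open>D\<close>: if \<open>d \<ge> D / 2\<close> the term \<open>v p d\<close> pays for
  \<open>sqrt (p a)\<close>, otherwise the margin \<open>X \<ge> p D / 2\<close> does.\<close>

lemma sqrt_sub_pos_part_le:
  fixes p a D d v X :: real
  assumes "0 \<le> p" "0 < a" "0 < D" "0 \<le> d" "0 < v" and X: "p * (D - d) \<le> X"
  shows "max 0 (sqrt (p * a) - max 0 X) \<le> a * (1 + 1 / v) / (2 * D) + v * p * d"
proof -
  have split: "a * (1 + 1 / v) / (2 * D) = a / (2 * D) + a / (2 * D * v)"
    using assms by (simp add: field_simps)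
  have nonneg: "0 \<le> a / (2 * D)" "0 \<le> a / (2 * D * v)" "0 \<le> v * p * d"
    using assms by auto
  show ?thesis
  proof (cases "D \<le> 2 * d")
    case True
    have "sqrt (p * a) = sqrt ((p * D * v) * (a / (D * v)))"
      using assms by (simp add: field_simps)
    also have "\<dots> \<le> (p * D * v + a / (D * v)) / 2"
      by (rule arith_geo_mean_sqrt) (use assms in auto)
    also have "\<dots> = p * D * v / 2 + a / (2 * D * v)"
      by (simp add: field_simps)
    also have "p * D * v / 2 \<le> v * p * d"
      using mult_left_mono[OF True, of "p * v / 2"] assms by (simp add: algebra_simps)
    finally show ?thesis
      using split nonneg by linarith
  next
    case False
    then have "p * D / 2 \<le> X"
      using X mult_left_mono[of "D / 2" "D - d" p] assms by auto
    moreover have "sqrt (p * a) = sqrt ((p * D) * (a / D))"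
      using assms by (simp add: field_simps)
    moreover have "sqrt ((p * D) * (a / D)) \<le> (p * D + a / D) / 2"
      by (rule arith_geo_mean_sqrt) (use assms in auto)
    moreover have "a / D / 2 = a / (2 * D)"
      by simp
    ultimately show ?thesis
      using split nonneg by (auto simp: max_def add_divide_distrib)
  qed
qed

lemma sum_far_slack_le:
  fixes P d X :: "nat \<Rightarrow> real" and k :: "nat \<Rightarrow> nat"
  assumes "1 \<le> m" "0 < a" "0 < v"
    and far: "\<And>j. j \<in> J \<Longrightarrow>
      2 \<le> k j \<and> 0 \<le> P j \<and> 0 \<le> d j \<and> P j * (real (dyadic_scale (k j)) / real m - d j) \<le> X j"
  shows "(\<Sum>j\<in>J. max 0 (sqrt (P j * a) - max 0 (X j)))
         \<le> 2 * a * real m * (1 + 1 / v) * (\<Sum>j\<in>J. 1 / real (k j)) + v * (\<Sum>j\<in>J. P j * d j)"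
proof -
  define K where "K = a * real m * (1 + 1 / v)"
  have "max 0 (sqrt (P j * a) - max 0 (X j)) \<le> 2 * K * (1 / real (k j)) + v * (P j * d j)"
    if "j \<in> J" for j
  proof -
    define h where "h = dyadic_scale (k j)"
    have h: "1 \<le> h" "real (k j) < 4 * real h"
      using dyadic_scale_bounds[of "k j"] far[OF that] unfolding h_def by auto
    have "max 0 (sqrt (P j * a) - max 0 (X j))
          \<le> a * (1 + 1 / v) / (2 * (real h / real m)) + v * P j * d j"
      using far[OF that] h assms unfolding h_def by (intro sqrt_sub_pos_part_le) auto
    also have "a * (1 + 1 / v) / (2 * (real h / real m)) = K * (1 / (2 * real h))"
      unfolding K_def using h by (simp add: field_simps)
    also have "K * (1 / (2 * real h)) \<le> K * (2 * (1 / real (k j)))"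
      using h far[OF that] assms unfolding K_def by (intro mult_left_mono) (auto simp: field_simps)
    finally show ?thesis
      by (simp add: mult_ac)
  qed
  then have "(\<Sum>j\<in>J. max 0 (sqrt (P j * a) - max 0 (X j)))
             \<le> (\<Sum>j\<in>J. 2 * K * (1 / real (k j)) + v * (P j * d j))"
    by (rule sum_mono)
  also have "\<dots> = 2 * K * (\<Sum>j\<in>J. 1 / real (k j)) + v * (\<Sum>j\<in>J. P j * d j)"
    by (simp add: sum.distrib sum_distrib_left)
  finally show ?thesis
    unfolding K_def by (simp add: mult.assoc)
qed

text \<open>Buckets at the same dyadic scale \<open>h\<close> contribute summands of \<open>SCFDL E m (i - h)\<close>
  (resp. \<open>SCFDL E m (i + h)\<close>).\<close>

lemma sum_shifted_loss_left_le:
  assumes E: "bucket_expectation E m" and "i \<le> m" "1 \<le> m"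
  shows "(\<Sum>j | j + 2 \<le> i. piw E m j * max (qw E m j - real (i - dyadic_scale (i - j) + 1) / real m) 0)
         \<le> 2 * ln (real m) * SCDL E m"
proof (rule sum_le_ln_mult_by_dyadic_scale[where k="\<lambda>j. i - j"])
  fix h assume "h \<in> (\<lambda>j. dyadic_scale (i - j)) ` {j. j + 2 \<le> i}"
  let ?F = "{j \<in> {j. j + 2 \<le> i}. dyadic_scale (i - j) = h}"
  have P: "0 \<le> piw E m j" for j
    using bucket_expectation_piw_nonneg[OF E] .
  have "(\<Sum>j\<in>?F. piw E m j * max (qw E m j - real (i - dyadic_scale (i - j) + 1) / real m) 0)
        = (\<Sum>j\<in>?F. piw E m j * max (qw E m j - real (i - h + 1) / real m) 0)"
    by (intro sum.cong) auto
  also have "\<dots> \<le> (\<Sum>j = 0..i - h. piw E m j * max (qw E m j - real (i - h + 1) / real m) 0)"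
  proof (rule sum_mono2)
    show "?F \<subseteq> {0..i - h}"
    proof
      fix j assume j: "j \<in> ?F"
      then have "2 * dyadic_scale (i - j) \<le> i - j"
        using dyadic_scale_bounds(2)[of "i - j"] by auto
      then show "j \<in> {0..i - h}"
        using j by auto
    qed
  qed (use P in auto)
  also have "\<dots> \<le> SCFDL E m (i - h)"
    unfolding SCFDL_def using P by (intro add_increasing2 sum_nonneg mult_nonneg_nonneg) auto
  also have "\<dots> \<le> SCDL E m"
    using assms by (intro SCFDL_le_SCDL) auto
  finally show "(\<Sum>j\<in>?F. piw E m j * max (qw E m j - real (i - dyadic_scale (i - j) + 1) / real m) 0)
                \<le> SCDL E m" .
qed (use assms SCDL_nonneg[OF E] in \<open>auto intro: finite_subset[of _ "{..i}"]\<close>)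

lemma sum_shifted_loss_right_le:
  assumes E: "bucket_expectation E m" and "1 \<le> m"
  shows "(\<Sum>j = i + 2..m. piw E m j * max (real (i + dyadic_scale (j - i)) / real m - qw E m j) 0)
         \<le> 2 * ln (real m) * SCDL E m"
proof (rule sum_le_ln_mult_by_dyadic_scale[where k="\<lambda>j. j - i"])
  fix h assume "h \<in> (\<lambda>j. dyadic_scale (j - i)) ` {i + 2..m}"
  then obtain j0 where j0: "j0 \<in> {i + 2..m}" "h = dyadic_scale (j0 - i)"
    by auto
  then have "2 * h \<le> j0 - i"
    using dyadic_scale_bounds(2)[of "j0 - i"] by auto
  then have "i + h \<le> m"
    using j0 by auto
  let ?F = "{j \<in> {i + 2..m}. dyadic_scale (j - i) = h}"
  have P: "0 \<le> piw E m j" for j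
    using bucket_expectation_piw_nonneg[OF E] .
  have "(\<Sum>j\<in>?F. piw E m j * max (real (i + dyadic_scale (j - i)) / real m - qw E m j) 0)
        = (\<Sum>j\<in>?F. piw E m j * max (real (i + h) / real m - qw E m j) 0)"
    by (intro sum.cong) auto
  also have "\<dots> \<le> (\<Sum>j = i + h + 1..m. piw E m j * max (real (i + h) / real m - qw E m j) 0)"
  proof (rule sum_mono2)
    show "?F \<subseteq> {i + h + 1..m}"
    proof
      fix j assume j: "j \<in> ?F"
      then have "2 * dyadic_scale (j - i) \<le> j - i" "1 \<le> dyadic_scale (j - i)"
        using dyadic_scale_bounds(1,2)[of "j - i"] by auto
      then show "j \<in> {i + h + 1..m}"
        using j by auto
    qed
  qed (use P in auto)
  also have "\<dots> \<le> SCFDL E m (i + h)"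
    unfolding SCFDL_def using P by (intro add_increasing sum_nonneg mult_nonneg_nonneg) auto
  also have "\<dots> \<le> SCDL E m"
    using \<open>i + h \<le> m\<close> by (rule SCFDL_le_SCDL)
  finally show "(\<Sum>j\<in>?F. piw E m j * max (real (i + dyadic_scale (j - i)) / real m - qw E m j) 0)
                \<le> SCDL E m" .
qed (use assms SCDL_nonneg[OF E] in auto)

definition bucket_slack ::
    "(((real \<times> bool) \<Rightarrow> real) \<Rightarrow> real) \<Rightarrow> nat \<Rightarrow> nat \<Rightarrow> real \<Rightarrow> nat \<Rightarrow> real" where
  "bucket_slack E m i a j = max 0 (sqrt (piw E m j * a) - max 0 (- signed_bias E m i j))"

lemma sum_slack_far_left_le:
  assumes E: "bucket_expectation E m" and "i \<le> m" "1 \<le> m" "0 < a" "0 < v"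
  shows "(\<Sum>j | j + 2 \<le> i. bucket_slack E m i a j)
         \<le> 2 * a * real m * (1 + 1 / v) * ln (real m) + v * (2 * ln (real m) * SCDL E m)"
proof -
  define d where "d j = max (qw E m j - real (i - dyadic_scale (i - j) + 1) / real m) 0" for j
  have "(\<Sum>j | j + 2 \<le> i. bucket_slack E m i a j)
        \<le> 2 * a * real m * (1 + 1 / v) * (\<Sum>j | j + 2 \<le> i. 1 / real (i - j))
          + v * (\<Sum>j | j + 2 \<le> i. piw E m j * d j)"
    unfolding bucket_slack_def
  proof (rule sum_far_slack_le)
    fix j assume j: "j \<in> {j. j + 2 \<le> i}"
    define h where "h = dyadic_scale (i - j)"
    have "2 * h \<le> i - j"
      using dyadic_scale_bounds[of "i - j"] j unfolding h_def by auto
    then have r: "real (i - h + 1) = real i - real h + 1"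
      by (simp add: of_nat_diff)
    have "qw E m j - real (i - h + 1) / real m \<le> d j"
      unfolding d_def h_def[symmetric] by (rule max.cobounded1)
    moreover have "real h / real m - (qw E m j - (real i - real h + 1) / real m)
                   = real (i + 1) / real m - qw E m j"
      using \<open>1 \<le> m\<close> by (simp add: field_simps)
    ultimately have "real h / real m - d j \<le> real (i + 1) / real m - qw E m j"
      unfolding r by linarith
    moreover have "- signed_bias E m i j = piw E m j * (real (i + 1) / real m - qw E m j)"
      using j by (simp add: signed_bias_eq[OF E] algebra_simps)
    ultimately have "piw E m j * (real h / real m - d j) \<le> - signed_bias E m i j"
      using bucket_expectation_piw_nonneg[OF E] by (simp add: mult_left_mono)
    then show "2 \<le> i - j \<and> 0 \<le> piw E m j \<and> 0 \<le> d j
               \<and> piw E m j * (real (dyadic_scale (i - j)) / real m - d j) \<le> - signed_bias E m i j"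
      using j bucket_expectation_piw_nonneg[OF E] unfolding h_def d_def by auto
  qed (use assms in auto)
  also have "\<dots> \<le> 2 * a * real m * (1 + 1 / v) * ln (real m) + v * (2 * ln (real m) * SCDL E m)"
  proof (intro add_mono mult_left_mono)
    have "ln (real i) \<le> ln (real m)"
      using assms by (cases "i = 0") auto
    then show "(\<Sum>j | j + 2 \<le> i. 1 / real (i - j)) \<le> ln (real m)"
      using sum_inverse_dist_left_le_ln[of i] by linarith
    show "(\<Sum>j | j + 2 \<le> i. piw E m j * d j) \<le> 2 * ln (real m) * SCDL E m"
      unfolding d_def using assms by (intro sum_shifted_loss_left_le)
  qed (use assms in auto)
  finally show ?thesis .
qed

lemma sum_slack_far_right_le:
  assumes E: "bucket_expectation E m" and "i \<le> m" "1 \<le> m" "0 < a" "0 < v"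
  shows "(\<Sum>j = i + 2..m. bucket_slack E m i a j)
         \<le> 2 * a * real m * (1 + 1 / v) * ln (real m) + v * (2 * ln (real m) * SCDL E m)"
proof -
  define d where "d j = max (real (i + dyadic_scale (j - i)) / real m - qw E m j) 0" for j
  have "(\<Sum>j = i + 2..m. bucket_slack E m i a j)
        \<le> 2 * a * real m * (1 + 1 / v) * (\<Sum>j = i + 2..m. 1 / real (j - i))
          + v * (\<Sum>j = i + 2..m. piw E m j * d j)"
    unfolding bucket_slack_def
  proof (rule sum_far_slack_le)
    fix j assume j: "j \<in> {i + 2..m}"
    define h where "h = dyadic_scale (j - i)"
    have "real (i + h) / real m - qw E m j \<le> d j"
      unfolding d_def h_def[symmetric] by (rule max.cobounded1)
    moreover have "qw E m j - real i / real m = real h / real m - (real (i + h) / real m - qw E m j)"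
      using \<open>1 \<le> m\<close> by (simp add: field_simps)
    ultimately have "real h / real m - d j \<le> qw E m j - real i / real m"
      by linarith
    moreover have "- signed_bias E m i j = piw E m j * (qw E m j - real i / real m)"
      using j by (simp add: signed_bias_eq[OF E] algebra_simps)
    ultimately have "piw E m j * (real h / real m - d j) \<le> - signed_bias E m i j"
      using bucket_expectation_piw_nonneg[OF E] by (simp add: mult_left_mono)
    then show "2 \<le> j - i \<and> 0 \<le> piw E m j \<and> 0 \<le> d j
               \<and> piw E m j * (real (dyadic_scale (j - i)) / real m - d j) \<le> - signed_bias E m i j"
      using j bucket_expectation_piw_nonneg[OF E] unfolding h_def d_def by auto
  qed (use assms in auto)
  also have "\<dots> \<le> 2 * a * real m * (1 + 1 / v) * ln (real m) + v * (2 * ln (real m) * SCDL E m)"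
  proof (intro add_mono mult_left_mono)
    have "ln (real (m - i)) \<le> ln (real m)"
      using assms by (cases "m - i = 0") auto
    then show "(\<Sum>j = i + 2..m. 1 / real (j - i)) \<le> ln (real m)"
      using sum_inverse_dist_right_le_ln[of i m] by linarith
    show "(\<Sum>j = i + 2..m. piw E m j * d j) \<le> 2 * ln (real m) * SCDL E m"
      unfolding d_def using assms by (intro sum_shifted_loss_right_le)
  qed (use assms in auto)
  finally show ?thesis .
qed

lemma sum_slack_near_le:
  assumes "bucket_expectation E m" "0 < a" "\<And>j. piw E m j \<le> 1"
  shows "(\<Sum>j = i - 1..min m (i + 1). bucket_slack E m i a j) \<le> 3 * sqrt a"
proof -
  have "bucket_slack E m i a j \<le> sqrt a" for j
    unfolding bucket_slack_def
  proof (rule max.boundedI)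
    show "0 \<le> sqrt a"
      using \<open>0 < a\<close> by simp
    have "sqrt (piw E m j * a) \<le> sqrt a"
      using assms bucket_expectation_piw_nonneg[OF assms(1)] by (simp add: mult_left_le_one_le)
    then show "sqrt (piw E m j * a) - max 0 (- signed_bias E m i j) \<le> sqrt a"
      using max.cobounded1[of 0 "- signed_bias E m i j"] by linarith
  qed
  then have "(\<Sum>j = i - 1..min m (i + 1). bucket_slack E m i a j)
             \<le> real (card {i - 1..min m (i + 1)}) * sqrt a"
    by (rule sum_bounded_above)
  also have "\<dots> \<le> 3 * sqrt a"
    using \<open>0 < a\<close> by (intro mult_right_mono) auto
  finally show ?thesis .
qed

lemma abs_pos_part_diff_le:
  fixes x y e b :: real
  assumes "\<bar>x - y\<bar> \<le> e + b" "0 \<le> e" "0 \<le> b"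
  shows "\<bar>max x 0 - max y 0\<bar> \<le> b + max 0 (e - max 0 (- y))"
  using assms by (auto simp: max_def abs_if)

lemma SCFDL_diff_le_sum_slack:
  assumes E1: "bucket_expectation E1 m" and E2: "bucket_expectation E2 m"
    and "i \<le> m" "0 \<le> a" "0 \<le> b"
    and dev: "\<And>j. j \<le> m \<Longrightarrow>
      \<bar>bucket_bias E1 m j (calib_threshold m i j) - bucket_bias E2 m j (calib_threshold m i j)\<bar>
        \<le> sqrt (piw E2 m j * a) + b"
  shows "\<bar>SCFDL E1 m i - SCFDL E2 m i\<bar> \<le> real (m + 1) * b + (\<Sum>j = 0..m. bucket_slack E2 m i a j)"
proof -
  have "\<bar>max (signed_bias E1 m i j) 0 - max (signed_bias E2 m i j) 0\<bar> \<le> b + bucket_slack E2 m i a j"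
    if "j \<in> {0..m}" for j
  proof -
    have "\<bar>signed_bias E1 m i j - signed_bias E2 m i j\<bar> \<le> sqrt (piw E2 m j * a) + b"
      using dev[of j] that by (simp add: signed_bias_def abs_minus_commute flip: right_diff_distrib)
    then show ?thesis
      unfolding bucket_slack_def using assms bucket_expectation_piw_nonneg[OF E2]
      by (intro abs_pos_part_diff_le) auto
  qed
  then have "(\<Sum>j = 0..m. \<bar>max (signed_bias E1 m i j) 0 - max (signed_bias E2 m i j) 0\<bar>)
             \<le> (\<Sum>j = 0..m. b + bucket_slack E2 m i a j)"
    by (rule sum_mono)
  moreover have "\<bar>SCFDL E1 m i - SCFDL E2 m i\<bar>
                 \<le> (\<Sum>j = 0..m. \<bar>max (signed_bias E1 m i j) 0 - max (signed_bias E2 m i j) 0\<bar>)"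
    unfolding SCFDL_eq_sum_signed_bias[OF E1 \<open>i \<le> m\<close>] SCFDL_eq_sum_signed_bias[OF E2 \<open>i \<le> m\<close>]
    by (simp add: sum_subtractf[symmetric] sum_abs)
  ultimately show ?thesis
    by (simp add: sum.distrib)
qed

lemma SCFDL_diff_le_weighted:
  assumes E1: "bucket_expectation E1 m" and E2: "bucket_expectation E2 m"
    and "1 \<le> m" "i \<le> m" "0 < a" "0 \<le> b" "0 < v" and "\<And>j. piw E2 m j \<le> 1"
    and "\<And>j. j \<le> m \<Longrightarrow>
      \<bar>bucket_bias E1 m j (calib_threshold m i j) - bucket_bias E2 m j (calib_threshold m i j)\<bar>
        \<le> sqrt (piw E2 m j * a) + b"
  shows "\<bar>SCFDL E1 m i - SCFDL E2 m i\<bar> \<le> 3 * sqrt a + real (m + 1) * b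
           + 4 * (a * real m * (1 + 1 / v) + v * SCDL E2 m) * ln (real m)"
proof -
  let ?slack = "bucket_slack E2 m i a"
  let ?near = "{i - 1..min m (i + 1)}" and ?left = "{j. j + 2 \<le> i}" and ?right = "{i + 2..m}"
  define F where "F = 2 * a * real m * (1 + 1 / v) * ln (real m) + v * (2 * ln (real m) * SCDL E2 m)"
  have fin: "finite ?left"
    by (rule finite_subset[of _ "{..i}"]) auto
  have "{0..m} = ?near \<union> ?left \<union> ?right"
    using \<open>i \<le> m\<close> by auto
  then have "sum ?slack {0..m} = sum ?slack (?near \<union> ?left) + sum ?slack ?right"
    by (simp only:) (rule sum.union_disjoint, use fin in auto)
  also have "sum ?slack (?near \<union> ?left) = sum ?slack ?near + sum ?slack ?left"
    by (rule sum.union_disjoint) (use fin in auto)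
  finally have "sum ?slack {0..m} = sum ?slack ?near + sum ?slack ?left + sum ?slack ?right" .
  moreover have "\<bar>SCFDL E1 m i - SCFDL E2 m i\<bar> \<le> real (m + 1) * b + sum ?slack {0..m}"
    using assms by (intro SCFDL_diff_le_sum_slack) auto
  moreover have "sum ?slack ?near \<le> 3 * sqrt a"
    using assms by (intro sum_slack_near_le) auto
  moreover have "sum ?slack ?left \<le> F" "sum ?slack ?right \<le> F"
    unfolding F_def using assms by (intro sum_slack_far_left_le sum_slack_far_right_le; simp)+
  ultimately have "\<bar>SCFDL E1 m i - SCFDL E2 m i\<bar> \<le> 3 * sqrt a + real (m + 1) * b + 2 * F"
    by linarith
  also have "2 * F = 4 * (a * real m * (1 + 1 / v) + v * SCDL E2 m) * ln (real m)"
    unfolding F_def by (simp add: algebra_simps)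
  finally show ?thesis .
qed

lemma exists_pos_weight_le:
  fixes A s :: real
  assumes "0 < A" "0 \<le> s"
  shows "\<exists>v>0. A * (1 + 1 / v) + v * s \<le> 3 * A + 2 * sqrt (A * s)"
proof -
  define S where "S = s + A"
  define v where "v = sqrt (A / S)"
  have "0 < S" "0 < v"
    using assms unfolding S_def v_def by auto
  have "A / v = sqrt (A * S)"
  proof -
    have "A = sqrt A * sqrt A"
      using assms by simp
    then show ?thesis
      unfolding v_def using assms \<open>0 < S\<close> by (simp add: real_sqrt_divide real_sqrt_mult field_simps)
  qed
  moreover have "v * S = sqrt (A * S)"
  proof -
    have "S = sqrt S * sqrt S"
      using \<open>0 < S\<close> by simp
    then show ?thesis
      unfolding v_def using assms \<open>0 < S\<close> by (simp add: real_sqrt_divide real_sqrt_mult field_simps)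
  qed
  moreover have "sqrt (A * S) \<le> sqrt (A * s) + A"
  proof -
    have "sqrt (A * S) = sqrt (A * s + A * A)"
      unfolding S_def by (simp add: algebra_simps)
    also have "\<dots> \<le> sqrt (A * s) + sqrt (A * A)"
      using assms by (intro sqrt_add_le_add_sqrt) auto
    finally show ?thesis
      using assms by simp
  qed
  moreover have "v * s \<le> v * S"
    using \<open>0 < v\<close> assms unfolding S_def by simp
  ultimately have "A * (1 + 1 / v) + v * s \<le> 3 * A + 2 * sqrt (A * s)"
    by (simp add: algebra_simps)
  with \<open>0 < v\<close> show ?thesis
    by blast
qed

lemma SCFDL_diff_le:
  assumes E1: "bucket_expectation E1 m" and E2: "bucket_expectation E2 m"
    and "1 \<le> m" "i \<le> m" "0 < a" "0 \<le> b" and "\<And>j. piw E2 m j \<le> 1"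
    and "\<And>j. j \<le> m \<Longrightarrow>
      \<bar>bucket_bias E1 m j (calib_threshold m i j) - bucket_bias E2 m j (calib_threshold m i j)\<bar>
        \<le> sqrt (piw E2 m j * a) + b"
  shows "\<bar>SCFDL E1 m i - SCFDL E2 m i\<bar> \<le> 3 * sqrt a + real (m + 1) * b
           + 12 * a * real m * ln (real m) + 8 * ln (real m) * sqrt (a * real m * SCDL E2 m)"
proof -
  obtain v where "0 < v" and v: "a * real m * (1 + 1 / v) + v * SCDL E2 m
                                 \<le> 3 * (a * real m) + 2 * sqrt (a * real m * SCDL E2 m)"
    using exists_pos_weight_le[of "a * real m" "SCDL E2 m"] assms SCDL_nonneg[OF E2] by auto
  have "\<bar>SCFDL E1 m i - SCFDL E2 m i\<bar> \<le> 3 * sqrt a + real (m + 1) * b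
          + 4 * (a * real m * (1 + 1 / v) + v * SCDL E2 m) * ln (real m)"
    using assms \<open>0 < v\<close> by (intro SCFDL_diff_le_weighted) auto
  also have "4 * (a * real m * (1 + 1 / v) + v * SCDL E2 m) * ln (real m)
             \<le> 4 * (3 * (a * real m) + 2 * sqrt (a * real m * SCDL E2 m)) * ln (real m)"
    using v \<open>1 \<le> m\<close> by (intro mult_right_mono) auto
  finally show ?thesis
    by (simp add: algebra_simps)
qed

section \<open>A Bernstein-type tail bound for sample means\<close>

lemma exp_le_quadratic:
  fixes z :: real
  assumes "\<bar>z\<bar> \<le> 1"
  shows "exp z \<le> 1 + z + z\<^sup>2"
proof (cases "0 \<le> z")
  case True
  then show ?thesis
    using exp_bound[of z] assms by auto
next
  case False
  define y where "y = - z"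
  have y: "0 < y" "y \<le> 1"
    using False assms unfolding y_def by auto
  have "1 \<le> (1 - y + y\<^sup>2) * (1 + y)"
    using y by (simp add: algebra_simps power2_eq_square power3_eq_cube)
  also have "\<dots> \<le> (1 - y + y\<^sup>2) * exp y"
  proof (rule mult_left_mono)
    show "1 + y \<le> exp y"
      by (rule exp_ge_add_one_self)
    have "y * y \<le> y * 1"
      using y by (intro mult_left_mono) auto
    then show "0 \<le> 1 - y + y\<^sup>2"
      using y by (simp add: power2_eq_square)
  qed
  finally have "1 / exp y \<le> 1 - y + y\<^sup>2"
    by (simp add: field_simps)
  then show ?thesis
    unfolding y_def by (simp add: exp_minus field_simps)
qed

lemma (in prob_space) nn_integral_exp_centered_le:
  fixes g :: "'a \<Rightarrow> real"
  assumes g[measurable]: "g \<in> borel_measurable M" and bound: "\<And>x. \<bar>g x\<bar> \<le> B"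
    and "0 \<le> l" "2 * l * B \<le> 1"
  shows "(\<integral>\<^sup>+x. ennreal (exp (l * (g x - expectation g))) \<partial>M)
         \<le> ennreal (exp (l\<^sup>2 * expectation (\<lambda>x. (g x)\<^sup>2)))"
proof -
  define \<mu> where "\<mu> = expectation g"
  have int_g: "integrable M g"
    using bound by (intro integrable_const_bound[where B=B]) auto
  have "0 \<le> B"
    using bound[of undefined] by linarith
  then have "\<bar>(g x)\<^sup>2\<bar> \<le> B\<^sup>2" for x
    using bound[of x] abs_le_square_iff[of "g x" B] by simp
  then have int_g2: "integrable M (\<lambda>x. (g x)\<^sup>2)"
    by (intro integrable_const_bound[where B="B\<^sup>2"]) auto
  have lower: "- B \<le> g x" and upper: "g x \<le> B" for x
    using bound[of x] by linarith+
  have "expectation (\<lambda>_. - B) \<le> expectation g"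
    using lower by (intro integral_mono int_g) auto
  moreover have "expectation g \<le> expectation (\<lambda>_. B)"
    using upper by (intro integral_mono int_g) auto
  ultimately have "\<bar>\<mu>\<bar> \<le> B"
    unfolding \<mu>_def by (simp add: prob_space abs_le_iff)
  then have small: "\<bar>l * (g x - \<mu>)\<bar> \<le> 1" for x
  proof -
    have "\<bar>g x - \<mu>\<bar> \<le> 2 * B"
      using bound[of x] \<open>\<bar>\<mu>\<bar> \<le> B\<close> by linarith
    then have "l * \<bar>g x - \<mu>\<bar> \<le> l * (2 * B)"
      using \<open>0 \<le> l\<close> by (rule mult_left_mono)
    then show ?thesis
      using \<open>0 \<le> l\<close> \<open>2 * l * B \<le> 1\<close> by (simp add: abs_mult)
  qed
  have int_exp: "integrable M (\<lambda>x. exp (l * (g x - \<mu>)))"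
    using small by (intro integrable_const_bound[where B="exp 1"]) (auto simp: abs_le_iff)
  have quad: "(\<lambda>x. 1 + l * (g x - \<mu>) + (l * (g x - \<mu>))\<^sup>2)
      = (\<lambda>x. (1 + l\<^sup>2 * \<mu>\<^sup>2 - l * \<mu>) + ((l - 2 * l\<^sup>2 * \<mu>) * g x + l\<^sup>2 * (g x)\<^sup>2))"
    by (rule ext) (simp add: power2_eq_square algebra_simps)
  have int_quad: "integrable M (\<lambda>x. 1 + l * (g x - \<mu>) + (l * (g x - \<mu>))\<^sup>2)"
    unfolding quad using int_g int_g2 by auto
  have "expectation (\<lambda>x. exp (l * (g x - \<mu>)))
        \<le> expectation (\<lambda>x. 1 + l * (g x - \<mu>) + (l * (g x - \<mu>))\<^sup>2)"
    using small by (intro integral_mono int_exp int_quad exp_le_quadratic)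
  also have "\<dots> = 1 + l\<^sup>2 * (expectation (\<lambda>x. (g x)\<^sup>2) - \<mu>\<^sup>2)"
    unfolding quad using int_g int_g2 by (simp add: \<mu>_def prob_space power2_eq_square algebra_simps)
  also have "\<dots> \<le> 1 + l\<^sup>2 * expectation (\<lambda>x. (g x)\<^sup>2)"
    by (simp add: mult_left_mono)
  also have "\<dots> \<le> exp (l\<^sup>2 * expectation (\<lambda>x. (g x)\<^sup>2))"
    by (rule exp_ge_add_one_self)
  finally show ?thesis
    unfolding \<mu>_def[symmetric] using int_exp by (simp add: nn_integral_eq_integral ennreal_leI)
qed

lemma (in prob_space) chernoff_sample_sum:
  fixes g :: "'a \<Rightarrow> real"
  assumes g[measurable]: "g \<in> borel_measurable M"
    and bound: "\<And>x. \<bar>g x\<bar> \<le> B" and "0 < l" "2 * l * B \<le> 1"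
  shows "measure (PiM {..<T} (\<lambda>_. M))
           {xs \<in> space (PiM {..<T} (\<lambda>_. M)). c \<le> (\<Sum>t<T. g (xs t) - expectation g)}
         \<le> exp (- l * c) * exp (l\<^sup>2 * expectation (\<lambda>x. (g x)\<^sup>2)) ^ T"
proof -
  interpret P: product_prob_space "\<lambda>_::nat. M" "{..<T}"
    by unfold_locales
  let ?M = "PiM {..<T} (\<lambda>_. M)"
  define \<mu> where "\<mu> = expectation g"
  have "emeasure ?M {xs \<in> space ?M. c \<le> (\<Sum>t<T. g (xs t) - \<mu>)}
        \<le> ennreal (exp (- l * c))
            * (\<integral>\<^sup>+xs. ennreal (exp (l * (\<Sum>t<T. g (xs t) - \<mu>))) * indicator (space ?M) xs \<partial>?M)"
    using \<open>0 < l\<close> by (intro Chernoff_ineq_nn_integral_ge) auto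
  also have "(\<integral>\<^sup>+xs. ennreal (exp (l * (\<Sum>t<T. g (xs t) - \<mu>))) * indicator (space ?M) xs \<partial>?M)
             = (\<integral>\<^sup>+xs. (\<Prod>t\<in>{..<T}. ennreal (exp (l * (g (xs t) - \<mu>)))) \<partial>?M)"
    by (intro nn_integral_cong) (simp add: sum_distrib_left exp_sum prod_ennreal)
  also have "\<dots> = (\<Prod>t\<in>{..<T}. \<integral>\<^sup>+y. ennreal (exp (l * (g y - \<mu>))) \<partial>M)"
    by (rule P.product_nn_integral_prod) auto
  also have "\<dots> \<le> (\<Prod>t\<in>{..<T}. ennreal (exp (l\<^sup>2 * expectation (\<lambda>x. (g x)\<^sup>2))))"
    unfolding \<mu>_def using assms by (intro prod_mono_ennreal nn_integral_exp_centered_le) auto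
  finally have "emeasure ?M {xs \<in> space ?M. c \<le> (\<Sum>t<T. g (xs t) - \<mu>)}
                \<le> ennreal (exp (- l * c) * exp (l\<^sup>2 * expectation (\<lambda>x. (g x)\<^sup>2)) ^ T)"
    by (simp add: ennreal_power ennreal_mult mult_left_mono)
  then show ?thesis
    unfolding \<mu>_def by (simp add: P.emeasure_eq_measure)
qed

lemma bernstein_exponent:
  fixes B L V T e :: real
  assumes "0 < B" "0 < L" "0 \<le> V" "0 < T" and e: "2 * sqrt (V * L / T) + 4 * B * L / T \<le> e"
  shows "\<exists>l>0. 2 * l * B \<le> 1 \<and> T * (l\<^sup>2 * V - l * e) \<le> - L"
proof -
  have "0 \<le> 2 * sqrt (V * L / T)" "0 < 4 * B * L / T"
    using assms by simp_all
  then have "4 * B * L / T \<le> e" "0 < e" "2 * sqrt (V * L / T) \<le> e"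
    using e by linarith+
  then have "4 * B * L \<le> T * e"
    using assms by (simp add: field_simps)
  show ?thesis
  proof (cases "e * B \<le> V")
    case True
    have "0 < e * B"
      using \<open>0 < e\<close> \<open>0 < B\<close> by simp
    then have "0 < V"
      using True by linarith
    define l where "l = e / (2 * V)"
    have "0 < l" "2 * l * B \<le> 1"
      unfolding l_def using True \<open>0 < V\<close> \<open>0 < e\<close> by (auto simp: field_simps)
    have "(2 * sqrt (V * L / T))\<^sup>2 \<le> e\<^sup>2"
      using \<open>2 * sqrt (V * L / T) \<le> e\<close> assms by (intro power_mono) auto
    then have "4 * V * L \<le> T * e\<^sup>2"
      using assms by (simp add: power_mult_distrib field_simps)
    then have "L \<le> T * e\<^sup>2 / (4 * V)"
      using \<open>0 < V\<close> by (simp add: field_simps)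
    moreover have "T * (l\<^sup>2 * V - l * e) = - (T * e\<^sup>2 / (4 * V))"
      unfolding l_def using \<open>0 < V\<close> by (simp add: field_simps power2_eq_square)
    ultimately have "T * (l\<^sup>2 * V - l * e) \<le> - L"
      by linarith
    with \<open>0 < l\<close> \<open>2 * l * B \<le> 1\<close> show ?thesis
      by blast
  next
    case False
    define l where "l = 1 / (2 * B)"
    have "T * (l\<^sup>2 * V - l * e) = (T * V - T * (e * B)) / (4 * B\<^sup>2) - T * e / (4 * B)"
      unfolding l_def using \<open>0 < B\<close> by (simp add: field_simps power2_eq_square)
    moreover have "T * V - T * (e * B) \<le> 0"
      using False \<open>0 < T\<close> by (simp add: right_diff_distrib[symmetric] mult_nonneg_nonpos)
    then have "(T * V - T * (e * B)) / (4 * B\<^sup>2) \<le> 0"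
      by (simp add: divide_nonpos_nonneg)
    moreover have "L \<le> T * e / (4 * B)"
      using \<open>4 * B * L \<le> T * e\<close> \<open>0 < B\<close> by (simp add: field_simps)
    ultimately have "T * (l\<^sup>2 * V - l * e) \<le> - L"
      by linarith
    moreover have "0 < l" "2 * l * B \<le> 1"
      unfolding l_def using \<open>0 < B\<close> by auto
    ultimately show ?thesis
      by blast
  qed
qed
lemma (in prob_space) sample_mean_tail:
  fixes g :: "'a \<Rightarrow> real" and T :: nat
  assumes g: "g \<in> borel_measurable M" and bound: "\<And>x. \<bar>g x\<bar> \<le> B"
    and "0 < B" "1 \<le> T" "0 < L"
    and e: "2 * sqrt (expectation (\<lambda>x. (g x)\<^sup>2) * L / T) + 4 * B * L / T \<le> e"
  shows "measure (PiM {..<T} (\<lambda>_. M))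
           {xs \<in> space (PiM {..<T} (\<lambda>_. M)). e \<le> (\<Sum>t<T. g (xs t)) / T - expectation g}
         \<le> exp (- L)"
proof -
  define V where "V = expectation (\<lambda>x. (g x)\<^sup>2)"
  have "0 \<le> V"
    unfolding V_def by (intro integral_nonneg_AE) auto
  obtain l where "0 < l" "2 * l * B \<le> 1" and l: "real T * (l\<^sup>2 * V - l * e) \<le> - L"
    using bernstein_exponent[of B L V "real T" e] assms \<open>0 \<le> V\<close> unfolding V_def by auto
  have "{xs \<in> space (PiM {..<T} (\<lambda>_. M)). e \<le> (\<Sum>t<T. g (xs t)) / T - expectation g}
        = {xs \<in> space (PiM {..<T} (\<lambda>_. M)). real T * e \<le> (\<Sum>t<T. g (xs t) - expectation g)}"
    using \<open>1 \<le> T\<close> by (auto simp: sum_subtractf field_simps)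
  also have "measure (PiM {..<T} (\<lambda>_. M)) \<dots> \<le> exp (- l * (real T * e)) * exp (l\<^sup>2 * V) ^ T"
    unfolding V_def by (rule chernoff_sample_sum[OF g bound \<open>0 < l\<close> \<open>2 * l * B \<le> 1\<close>])
  also have "\<dots> = exp (real T * (l\<^sup>2 * V - l * e))"
    by (simp add: exp_of_nat_mult[symmetric] exp_add[symmetric] algebra_simps)
  also have "\<dots> \<le> exp (- L)"
    using l by simp
  finally show ?thesis .
qed

lemma (in prob_space) sample_mean_abs_tail:
  fixes g :: "'a \<Rightarrow> real" and T :: nat
  assumes g[measurable]: "g \<in> borel_measurable M" and bound: "\<And>x. \<bar>g x\<bar> \<le> B"
    and "0 < B" "1 \<le> T" "0 < L"
    and e: "2 * sqrt (expectation (\<lambda>x. (g x)\<^sup>2) * L / T) + 4 * B * L / T \<le> e"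
  shows "measure (PiM {..<T} (\<lambda>_. M))
           {xs \<in> space (PiM {..<T} (\<lambda>_. M)). e \<le> \<bar>(\<Sum>t<T. g (xs t)) / T - expectation g\<bar>}
         \<le> 2 * exp (- L)"
proof -
  interpret P: product_prob_space "\<lambda>_::nat. M" "{..<T}"
    by unfold_locales
  let ?M = "PiM {..<T} (\<lambda>_. M)"
  let ?up = "{xs \<in> space ?M. e \<le> (\<Sum>t<T. g (xs t)) / T - expectation g}"
  let ?down = "{xs \<in> space ?M. e \<le> (\<Sum>t<T. - g (xs t)) / T - expectation (\<lambda>x. - g x)}"
  have "{xs \<in> space ?M. e \<le> \<bar>(\<Sum>t<T. g (xs t)) / T - expectation g\<bar>} = ?up \<union> ?down"
    by (auto simp: sum_negf abs_if)
  moreover have "measure ?M (?up \<union> ?down) \<le> measure ?M ?up + measure ?M ?down"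
    by (rule measure_Un_le) measurable
  moreover have "measure ?M ?up \<le> exp (- L)"
    by (rule sample_mean_tail[OF g bound]) (use assms in auto)
  moreover have "measure ?M ?down \<le> exp (- L)"
    by (rule sample_mean_tail[OF _ _ \<open>0 < B\<close> \<open>1 \<le> T\<close> \<open>0 < L\<close>]) (use assms in auto)
  ultimately show ?thesis
    by simp
qed

lemma wt_bounds: "0 \<le> wt m j p" "wt m j p \<le> 1"
  unfolding wt_def by auto

lemma measurable_wt [measurable]: "wt m j \<in> borel_measurable borel"
  unfolding wt_def by measurable

lemma bucket_test_bounds:
  fixes c :: real
  assumes "0 \<le> c" "c \<le> 2"
  shows "\<bar>wt m j p * (of_bool y - c)\<bar> \<le> 2" "(wt m j p * (of_bool y - c))\<^sup>2 \<le> 4 * wt m j p"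
proof -
  have w: "0 \<le> wt m j p" "wt m j p \<le> 1"
    by (rule wt_bounds)+
  have yc: "\<bar>of_bool y - c\<bar> \<le> 2"
    using assms by (cases y) auto
  have "\<bar>wt m j p * (of_bool y - c)\<bar> \<le> 1 * 2"
    unfolding abs_mult using w yc by (intro mult_mono) auto
  then show "\<bar>wt m j p * (of_bool y - c)\<bar> \<le> 2"
    by simp
  have "(wt m j p)\<^sup>2 \<le> wt m j p"
    using w by (simp add: power2_eq_square mult_left_le)
  moreover have "\<bar>of_bool y - c\<bar>\<^sup>2 \<le> 2\<^sup>2"
    using yc by (intro power_mono) auto
  then have "(of_bool y - c)\<^sup>2 \<le> 2\<^sup>2"
    by (simp only: power2_abs)
  ultimately have "(wt m j p)\<^sup>2 * (of_bool y - c)\<^sup>2 \<le> wt m j p * 2\<^sup>2"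
    using w by (intro mult_mono) auto
  then show "(wt m j p * (of_bool y - c))\<^sup>2 \<le> 4 * wt m j p"
    by (simp add: power_mult_distrib)
qed

lemma calib_threshold_bounds:
  assumes "1 \<le> m" "i \<le> m"
  shows "0 \<le> calib_threshold m i j" "calib_threshold m i j \<le> 2"
  using assms by (auto simp: calib_threshold_def field_simps)

lemma bucket_expectation_expS: "bucket_expectation (expS T xs) m"
proof -
  have "bucket_bias (expS T xs) m j c
        = expS T xs (\<lambda>(p, y). wt m j p * of_bool y) - c * piw (expS T xs) m j" for j c
    unfolding bucket_bias_def piw_def expS_def
    by (simp add: split_beta sum_subtractf sum_distrib_left algebra_simps diff_divide_distrib)
  moreover have "0 \<le> expS T xs (\<lambda>(p, y). wt m j p * of_bool y)" for j
    unfolding expS_def by (auto simp: split_beta wt_bounds intro!: sum_nonneg divide_nonneg_nonneg)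
  moreover have "expS T xs (\<lambda>(p, y). wt m j p * of_bool y) \<le> piw (expS T xs) m j" for j
    unfolding piw_def expS_def by (intro divide_right_mono sum_mono) (auto simp: split_beta wt_bounds)
  ultimately show ?thesis
    unfolding bucket_expectation_def by auto
qed

lemma ln_confidence_le:
  assumes "1 \<le> m" "0 < \<delta>" "\<delta> < 1 / (2 * real m)"
  shows "ln (2 * real (m + 1) / \<delta>) \<le> 3 * ln (1 / \<delta>)"
proof -
  have "2 * real m * \<delta> < 1" "\<delta> \<le> real m * \<delta>"
    using assms by (simp_all add: field_simps)
  then have "\<delta> < 1 / 2" "2 * real (m + 1) * \<delta> \<le> 2"
    by (simp_all add: algebra_simps)
  then have "2 * real (m + 1) \<le> 2 / \<delta>"
    using assms by (simp add: field_simps)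
  then have "2 * real (m + 1) / \<delta> \<le> 2 / \<delta> / \<delta>"
    using assms by (intro divide_right_mono) auto
  then have "ln (2 * real (m + 1) / \<delta>) \<le> ln (2 / \<delta> / \<delta>)"
    using assms by (subst ln_le_cancel_iff) auto
  also have "\<dots> = ln 2 + 2 * ln (1 / \<delta>)"
    using assms by (simp add: ln_div ln_mult)
  also have "ln 2 \<le> ln (1 / \<delta>)"
    using \<open>\<delta> < 1 / 2\<close> assms by (simp add: field_simps)
  finally show ?thesis
    by simp
qed

lemma explicit_bound_le_rate:
  fixes m T :: nat and \<Lambda> s L :: real
  assumes "2 \<le> m" "1 \<le> T" "0 \<le> s" "0 \<le> L" "L \<le> 3 * \<Lambda>"
  defines "a \<equiv> 16 * L / T" and "b \<equiv> 8 * L / T"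
  shows "3 * sqrt a + real (m + 1) * b + 12 * a * real m * ln (real m)
           + 8 * ln (real m) * sqrt (a * real m * s)
         \<le> 1000 * (sqrt (\<Lambda> / real T) + ln (real m) * sqrt (real m * s * \<Lambda> / real T)
                   + real m * ln (real m) * \<Lambda> / real T)"
proof -
  define u where "u = \<Lambda> / T"
  have "0 \<le> u" "a \<le> 48 * u" "b \<le> 24 * u"
    using assms unfolding u_def a_def b_def by (auto simp: field_simps)
  have "ln 2 \<le> ln (real m)"
    using assms by simp
  then have "1 / 2 \<le> ln (real m)"
    using ln2_ge_two_thirds by linarith
  have sqrt_48: "sqrt (48 * x) \<le> 7 * sqrt x" if "0 \<le> x" for x
  proof -
    have "sqrt (48 * x) \<le> sqrt (49 * x)"
      using that by (intro real_sqrt_le_mono) auto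
    then show ?thesis
      by (simp add: real_sqrt_mult)
  qed
  have "sqrt a \<le> 7 * sqrt u"
    using \<open>a \<le> 48 * u\<close> \<open>0 \<le> u\<close> sqrt_48[of u] real_sqrt_le_mono[of a "48 * u"] by linarith
  moreover have "8 * ln (real m) * sqrt (a * real m * s) \<le> 56 * (ln (real m) * sqrt (real m * s * u))"
  proof -
    have "a * real m * s \<le> 48 * (real m * s * u)"
      using mult_right_mono[OF \<open>a \<le> 48 * u\<close>, of "real m * s"] \<open>0 \<le> s\<close> by (simp add: algebra_simps)
    then have "sqrt (a * real m * s) \<le> sqrt (48 * (real m * s * u))"
      by (rule real_sqrt_le_mono)
    also have "\<dots> \<le> 7 * sqrt (real m * s * u)"
      using \<open>0 \<le> u\<close> \<open>0 \<le> s\<close> by (intro sqrt_48) simp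
    finally show ?thesis
      using \<open>1 / 2 \<le> ln (real m)\<close> mult_left_mono[of "sqrt (a * real m * s)" _ "8 * ln (real m)"]
      by (simp add: algebra_simps)
  qed
  moreover have "real (m + 1) * b \<le> 144 * (real m * ln (real m) * u)"
  proof -
    have "real (m + 1) * b \<le> (3 * real m) * (24 * u)"
      using \<open>b \<le> 24 * u\<close> assms unfolding b_def by (intro mult_mono) auto
    also have "\<dots> \<le> 144 * (real m * ln (real m) * u)"
      using \<open>1 / 2 \<le> ln (real m)\<close> \<open>0 \<le> u\<close> mult_left_mono[of "1 / 2" "ln (real m)" "real m * u"]
      by (simp add: algebra_simps)
    finally show ?thesis .
  qed
  moreover have "12 * a * real m * ln (real m) \<le> 576 * (real m * ln (real m) * u)"
    using \<open>a \<le> 48 * u\<close> \<open>1 / 2 \<le> ln (real m)\<close>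
      mult_right_mono[of a "48 * u" "12 * real m * ln (real m)"] by (simp add: algebra_simps)
  moreover have "0 \<le> sqrt u" "0 \<le> ln (real m) * sqrt (real m * s * u)" "0 \<le> real m * ln (real m) * u"
    using \<open>0 \<le> u\<close> \<open>0 \<le> s\<close> \<open>1 / 2 \<le> ln (real m)\<close> by simp_all
  ultimately have "3 * sqrt a + real (m + 1) * b + 12 * a * real m * ln (real m)
                     + 8 * ln (real m) * sqrt (a * real m * s)
                   \<le> 1000 * (sqrt u + ln (real m) * sqrt (real m * s * u) + real m * ln (real m) * u)"
    by argo
  then show ?thesis
    unfolding u_def by (simp add: mult.assoc)
qed

locale labelled_distribution = prob_space D for D :: "(real \<times> bool) measure" +
  assumes sets_eq [measurable_cong]: "sets D = sets (borel \<Otimes>\<^sub>M count_space UNIV)"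
begin

lemma bucket_expectation_expD: "bucket_expectation (expD D) m"
proof -
  have int_wy: "integrable D (\<lambda>(p, y). wt m j p * of_bool y)" for j
    by (intro integrable_const_bound[where B=1]) (auto simp: split_beta wt_bounds)
  have int_w: "integrable D (\<lambda>(p, y). wt m j p)" for j
    by (intro integrable_const_bound[where B=1]) (auto simp: split_beta wt_bounds)
  have "bucket_bias (expD D) m j c
        = expD D (\<lambda>(p, y). wt m j p * of_bool y) - c * piw (expD D) m j" for j c
  proof -
    have "(\<lambda>(p, y). wt m j p * (of_bool y - c))
          = (\<lambda>x. (\<lambda>(p, y). wt m j p * of_bool y) x - c * (\<lambda>(p, y). wt m j p) x)"
      by (auto simp: split_beta algebra_simps)
    then show ?thesis
      unfolding bucket_bias_def piw_def expD_def using int_wy int_w by simp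
  qed
  moreover have "0 \<le> expD D (\<lambda>(p, y). wt m j p * of_bool y)" for j
    unfolding expD_def by (intro integral_nonneg_AE) (auto simp: split_beta wt_bounds)
  moreover have "expD D (\<lambda>(p, y). wt m j p * of_bool y) \<le> piw (expD D) m j" for j
    unfolding piw_def expD_def by (intro integral_mono int_wy int_w) (auto simp: split_beta wt_bounds)
  ultimately show ?thesis
    unfolding bucket_expectation_def by auto
qed

lemma piw_expD_le_1: "piw (expD D) m j \<le> 1"
proof -
  have "piw (expD D) m j \<le> expectation (\<lambda>_. 1)"
    unfolding piw_def expD_def
    by (intro integral_mono integrable_const_bound[where B=1]) (auto simp: split_beta wt_bounds)
  then show ?thesis
    by (simp add: prob_space)
qed

lemma prob_bucket_bias_deviation:
  assumes "1 \<le> T" "0 < L" "0 \<le> c" "c \<le> 2"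
  shows "measure (PiM {..<T} (\<lambda>_. D))
           {xs \<in> space (PiM {..<T} (\<lambda>_. D)).
              sqrt (piw (expD D) m j * (16 * L / T)) + 8 * L / T
                \<le> \<bar>bucket_bias (expS T xs) m j c - bucket_bias (expD D) m j c\<bar>}
         \<le> 2 * exp (- L)"
proof -
  define g where "g = (\<lambda>(p, y). wt m j p * (of_bool y - c))"
  have bound: "\<bar>g x\<bar> \<le> 2" and sq: "(g x)\<^sup>2 \<le> 4 * (\<lambda>(p, y). wt m j p) x" for x
    using bucket_test_bounds[OF \<open>0 \<le> c\<close> \<open>c \<le> 2\<close>] unfolding g_def by (auto simp: split_beta)
  have [measurable]: "g \<in> borel_measurable D"
    unfolding g_def by measurable
  have "\<bar>(g x)\<^sup>2\<bar> \<le> 4" for x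
    using sq[of x] wt_bounds[of m j "fst x"] by (auto simp: split_beta)
  then have "integrable D (\<lambda>x. (g x)\<^sup>2)"
    by (intro integrable_const_bound[where B=4]) auto
  moreover have "integrable D (\<lambda>x. 4 * (\<lambda>(p, y). wt m j p) x)"
    by (intro integrable_const_bound[where B=4]) (auto simp: split_beta wt_bounds)
  ultimately have "integral\<^sup>L D (\<lambda>x. (g x)\<^sup>2) \<le> integral\<^sup>L D (\<lambda>x. 4 * (\<lambda>(p, y). wt m j p) x)"
    using sq by (intro integral_mono) auto
  then have "2 * sqrt (integral\<^sup>L D (\<lambda>x. (g x)\<^sup>2) * L / T) \<le> sqrt (piw (expD D) m j * (16 * L / T))"
    unfolding piw_def expD_def using assms
    by (subst real_sqrt_four[symmetric], subst real_sqrt_mult[symmetric])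
       (auto intro!: real_sqrt_le_mono simp: field_simps)
  then have "2 * sqrt (integral\<^sup>L D (\<lambda>x. (g x)\<^sup>2) * L / T) + 4 * 2 * L / T
             \<le> sqrt (piw (expD D) m j * (16 * L / T)) + 8 * L / T"
    by simp
  then have "measure (PiM {..<T} (\<lambda>_. D))
               {xs \<in> space (PiM {..<T} (\<lambda>_. D)).
                  sqrt (piw (expD D) m j * (16 * L / T)) + 8 * L / T
                    \<le> \<bar>(\<Sum>t<T. g (xs t)) / T - integral\<^sup>L D g\<bar>}
             \<le> 2 * exp (- L)"
    using assms by (intro sample_mean_abs_tail[OF _ bound]) auto
  then show ?thesis
    unfolding bucket_bias_def expS_def expD_def g_def .
qed

lemma measurable_SCFDL_sample:
  assumes "i \<le> m"
  shows "(\<lambda>xs. SCFDL (expS T xs) m i) \<in> borel_measurable (PiM {..<T} (\<lambda>_. D))"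
  unfolding SCFDL_eq_sum_signed_bias[OF bucket_expectation_expS assms]
    signed_bias_def bucket_bias_def expS_def
  by measurable

lemma prob_bucket_biases_close:
  fixes T :: nat and c :: "nat \<Rightarrow> real"
  assumes "1 \<le> T" "0 < L" and c: "\<And>j. 0 \<le> c j \<and> c j \<le> 2"
  shows "1 - 2 * real (m + 1) * exp (- L)
         \<le> measure (PiM {..<T} (\<lambda>_. D))
               {xs \<in> space (PiM {..<T} (\<lambda>_. D)). \<forall>j\<in>{0..m}.
                  \<bar>bucket_bias (expS T xs) m j (c j) - bucket_bias (expD D) m j (c j)\<bar>
                    < sqrt (piw (expD D) m j * (16 * L / T)) + 8 * L / T}"
    (is "_ \<le> measure ?M ?close")
proof -
  interpret P: product_prob_space "\<lambda>_::nat. D" "{..<T}"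
    by unfold_locales
  define bad where "bad j = {xs \<in> space ?M. sqrt (piw (expD D) m j * (16 * L / T)) + 8 * L / T
                      \<le> \<bar>bucket_bias (expS T xs) m j (c j) - bucket_bias (expD D) m j (c j)\<bar>}" for j
  have bad_sets: "bad j \<in> sets ?M" for j
    unfolding bad_def bucket_bias_def expS_def by measurable
  have "measure ?M (\<Union>j\<in>{0..m}. bad j) \<le> (\<Sum>j\<in>{0..m}. measure ?M (bad j))"
    using bad_sets by (intro measure_UNION_le) auto
  also have "\<dots> \<le> (\<Sum>j\<in>{0..m}. 2 * exp (- L))"
    unfolding bad_def using assms by (intro sum_mono prob_bucket_bias_deviation) auto
  finally have "measure ?M (\<Union>j\<in>{0..m}. bad j) \<le> 2 * real (m + 1) * exp (- L)"
    by (simp add: algebra_simps)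
  moreover have "?close = space ?M - (\<Union>j\<in>{0..m}. bad j)"
    unfolding bad_def by (auto simp: not_le)
  then have "measure ?M ?close = 1 - measure ?M (\<Union>j\<in>{0..m}. bad j)"
    using bad_sets by (simp add: P.prob_compl sets.finite_UN)
  ultimately show ?thesis
    by linarith
qed

lemma prob_SCFDL_deviation_le:
  fixes T :: nat
  assumes "1 \<le> T" "0 < L" "1 \<le> m" "i \<le> m"
  defines "a \<equiv> 16 * L / T" and "b \<equiv> 8 * L / T"
  shows "1 - 2 * real (m + 1) * exp (- L)
         \<le> measure (PiM {..<T} (\<lambda>_. D))
               {xs \<in> space (PiM {..<T} (\<lambda>_. D)).
                  \<bar>SCFDL (expS T xs) m i - SCFDL (expD D) m i\<bar>
                    \<le> 3 * sqrt a + real (m + 1) * b + 12 * a * real m * ln (real m)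
                       + 8 * ln (real m) * sqrt (a * real m * SCDL (expD D) m)}"
    (is "_ \<le> measure ?M ?good")
proof -
  interpret P: product_prob_space "\<lambda>_::nat. D" "{..<T}"
    by unfold_locales
  let ?close = "{xs \<in> space ?M. \<forall>j\<in>{0..m}.
      \<bar>bucket_bias (expS T xs) m j (calib_threshold m i j)
        - bucket_bias (expD D) m j (calib_threshold m i j)\<bar> < sqrt (piw (expD D) m j * a) + b}"
  have "1 - 2 * real (m + 1) * exp (- L) \<le> measure ?M ?close"
    unfolding a_def b_def using assms calib_threshold_bounds by (intro prob_bucket_biases_close) auto
  also have "\<dots> \<le> measure ?M ?good"
  proof (rule P.finite_measure_mono)
    show "?close \<subseteq> ?good"
    proof
      fix xs assume xs: "xs \<in> ?close"
      have "\<bar>bucket_bias (expS T xs) m j (calib_threshold m i j)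
              - bucket_bias (expD D) m j (calib_threshold m i j)\<bar>
            \<le> sqrt (piw (expD D) m j * a) + b" if "j \<le> m" for j
      proof -
        have "j \<in> {0..m}"
          using that by simp
        then show ?thesis
          using xs by (auto intro: less_imp_le)
      qed
      moreover have "0 < a" "0 \<le> b"
        using assms by simp_all
      ultimately show "xs \<in> ?good"
        using xs SCFDL_diff_le[OF bucket_expectation_expS bucket_expectation_expD \<open>1 \<le> m\<close> \<open>i \<le> m\<close>
            \<open>0 < a\<close> \<open>0 \<le> b\<close> piw_expD_le_1] by auto
    qed
    show "?good \<in> sets ?M"
      using measurable_SCFDL_sample[OF \<open>i \<le> m\<close>] by measurable
  qed
  finally show ?thesis .
qed

lemma prob_SCFDL_deviation_one:
  assumes "i \<le> 1" "0 \<le> R"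
  shows "measure (PiM {..<T} (\<lambda>_. D))
           {xs \<in> space (PiM {..<T} (\<lambda>_. D)). \<bar>SCFDL (expS T xs) 1 i - SCFDL (expD D) 1 i\<bar> \<le> R} = 1"
proof -
  interpret P: product_prob_space "\<lambda>_::nat. D" "{..<T}"
    by unfold_locales
  have "SCFDL (expS T xs) 1 i = 0" "SCFDL (expD D) 1 i = 0" for xs
    using SCFDL_one_eq_0[OF bucket_expectation_expS \<open>i \<le> 1\<close>]
      SCFDL_one_eq_0[OF bucket_expectation_expD \<open>i \<le> 1\<close>] by auto
  then show ?thesis
    using \<open>0 \<le> R\<close> by (simp add: P.P.prob_space)
qed

lemma prob_SCFDL_deviation_rate:
  fixes T :: nat
  assumes "1 \<le> T" "1 \<le> m" "i \<le> m" "0 < \<delta>" "\<delta> < 1 / (2 * real m)"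
  shows "1 - \<delta> \<le> measure (PiM {..<T} (\<lambda>_. D))
           {xs \<in> space (PiM {..<T} (\<lambda>_. D)).
              \<bar>SCFDL (expS T xs) m i - SCFDL (expD D) m i\<bar>
                \<le> 1000 * (sqrt (ln (1 / \<delta>) / real T)
                   + ln (real m) * sqrt (real m * SCDL (expD D) m * ln (1 / \<delta>) / real T)
                   + real m * ln (real m) * ln (1 / \<delta>) / real T)}"
    (is "_ \<le> measure ?M {xs \<in> space ?M. ?dev xs \<le> 1000 * ?rate}")
proof (cases "m = 1")
  case True
  then have "0 \<le> 1000 * ?rate"
    using assms by simp
  then show ?thesis
    using True assms prob_SCFDL_deviation_one[of i "1000 * ?rate" T] by auto
next
  case False
  interpret P: product_prob_space "\<lambda>_::nat. D" "{..<T}"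
    by unfold_locales
  define L where "L = ln (2 * real (m + 1) / \<delta>)"
  have "1 / (2 * real m) \<le> 1 / 2"
    using \<open>1 \<le> m\<close> by (simp add: field_simps)
  then have "\<delta> < 1 / 2"
    using assms by linarith
  then have "0 < L"
    unfolding L_def using \<open>0 < \<delta>\<close> by (simp add: field_simps)
  have "L \<le> 3 * ln (1 / \<delta>)"
    unfolding L_def using assms(2,4,5) by (rule ln_confidence_le)
  have "1 - \<delta> = 1 - 2 * real (m + 1) * exp (- L)"
    unfolding L_def using \<open>0 < \<delta>\<close> by (simp add: exp_minus)
  also have "\<dots> \<le> measure ?M {xs \<in> space ?M. ?dev xs
                \<le> 3 * sqrt (16 * L / T) + real (m + 1) * (8 * L / T)
                   + 12 * (16 * L / T) * real m * ln (real m)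
                   + 8 * ln (real m) * sqrt (16 * L / T * real m * SCDL (expD D) m)}"
    using \<open>1 \<le> T\<close> \<open>0 < L\<close> \<open>1 \<le> m\<close> \<open>i \<le> m\<close> by (rule prob_SCFDL_deviation_le)
  also have "\<dots> \<le> measure ?M {xs \<in> space ?M. ?dev xs \<le> 1000 * ?rate}"
    using explicit_bound_le_rate[of m T "SCDL (expD D) m" L "ln (1 / \<delta>)"] False assms
      \<open>0 < L\<close> \<open>L \<le> 3 * ln (1 / \<delta>)\<close> SCDL_nonneg[OF bucket_expectation_expD]
      measurable_SCFDL_sample[OF \<open>i \<le> m\<close>]
    by (intro P.finite_measure_mono) (auto simp: mult_ac)
  finally show ?thesis .
qed

end

theorem lemma7p2:
  "\<exists>C>0. \<forall>(D :: (real \<times> bool) measure) (T :: nat) (m :: nat) (i :: nat) (\<delta> :: real).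
     prob_space D \<longrightarrow>
     sets D = sets (borel \<Otimes>\<^sub>M count_space (UNIV :: bool set)) \<longrightarrow>
     (AE x in D. fst x \<in> {0..1}) \<longrightarrow>
     T \<ge> 1 \<longrightarrow> m \<ge> 1 \<longrightarrow> i \<le> m \<longrightarrow> 0 < \<delta> \<longrightarrow> \<delta> < 1 / (2 * real m) \<longrightarrow>
     measure (PiM {..<T} (\<lambda>_. D))
       {xs \<in> space (PiM {..<T} (\<lambda>_. D)).
          \<bar>SCFDL (expS T xs) m i - SCFDL (expD D) m i\<bar>
            \<le> C * (sqrt (ln (1 / \<delta>) / real T)
                   + ln (real m) * sqrt (real m * SCDL (expD D) m * ln (1 / \<delta>) / real T)
                   + real m * ln (real m) * ln (1 / \<delta>) / real T)}
       \<ge> 1 - \<delta>"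
proof (intro exI[of _ 1000] conjI allI impI)
  fix D :: "(real \<times> bool) measure" and T m i :: nat and \<delta> :: real
  assume "prob_space D" "sets D = sets (borel \<Otimes>\<^sub>M count_space (UNIV :: bool set))"
    and "T \<ge> 1" "m \<ge> 1" "i \<le> m" "0 < \<delta>" "\<delta> < 1 / (2 * real m)"
  then interpret labelled_distribution D
    by (simp add: labelled_distribution_def labelled_distribution_axioms_def)
  show "1 - \<delta> \<le> measure (PiM {..<T} (\<lambda>_. D))
          {xs \<in> space (PiM {..<T} (\<lambda>_. D)).
             \<bar>SCFDL (expS T xs) m i - SCFDL (expD D) m i\<bar>
               \<le> 1000 * (sqrt (ln (1 / \<delta>) / real T)
                  + ln (real m) * sqrt (real m * SCDL (expD D) m * ln (1 / \<delta>) / real T)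
                  + real m * ln (real m) * ln (1 / \<delta>) / real T)}"
    using \<open>T \<ge> 1\<close> \<open>m \<ge> 1\<close> \<open>i \<le> m\<close> \<open>0 < \<delta>\<close> \<open>\<delta> < 1 / (2 * real m)\<close>
    by (rule prob_SCFDL_deviation_rate)
qed simp

end
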